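(* Let $n \geq 1$ be an integer and consider Nim on the hypercube $Q_n$ in which every edge has weight $1$, with the playing piece $\Delta$ starting at a vertex. Then the second player $P_2$ has a winning strategy if and only if $n$ is even.
   Context: Nim on a graph: two players agree on a finite simple undirected graph $G$ whose edges carry positive integer weights, and a starting vertex on which a playing piece $\Delta$ is placed. Players $P_1$ (who moves first) and $P_2$ alternate. On a turn, the player chooses an edge of positive weight incident with the vertex currently holding $\Delta$, lowers that edge's weight by a positive integer amount, and moves $\Delta$ to the other endpoint of that edge. Edges of weight $0$ are no longer playable. A player who cannot move loses. The hypercube $Q_n$ has as vertices the binary $n$-tuples, two being adjacent iff they differ in exactly one coordinate. *)

theory Defs
  imports Main
begin

text \<open>A graph is given by its edge set E (edges are 2-element
sets of vertices); a weight function w assigns a natural number to each edge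
(edges of weight 0 are unplayable). A position is a pair (w, v) where v is the
vertex holding the playing piece.\<close>

definition nim_move :: "'a set set \<Rightarrow> ('a set \<Rightarrow> nat) \<times> 'a \<Rightarrow> ('a set \<Rightarrow> nat) \<times> 'a \<Rightarrow> bool" where
  "nim_move E p q \<longleftrightarrow>
     (\<exists>u k. {snd p, u} \<in> E \<and> u \<noteq> snd p \<and> 0 < k \<and> k \<le> fst p {snd p, u}
        \<and> q = ((fst p)({snd p, u} := fst p {snd p, u} - k), u))"

text \<open>Winning / losing positions for the player about to move (normal play:
a player who cannot move loses).\<close>

inductive nim_win :: "'a set set \<Rightarrow> ('a set \<Rightarrow> nat) \<times> 'a \<Rightarrow> bool"
  and nim_lose :: "'a set set \<Rightarrow> ('a set \<Rightarrow> nat) \<times> 'a \<Rightarrow> bool"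
  for E :: "'a set set" where
  win: "nim_move E p q \<Longrightarrow> nim_lose E q \<Longrightarrow> nim_win E p"
| lose: "(\<forall>q. nim_move E p q \<longrightarrow> nim_win E q) \<Longrightarrow> nim_lose E p"

definition nim_P2_wins :: "'a set set \<Rightarrow> ('a set \<Rightarrow> nat) \<Rightarrow> 'a \<Rightarrow> bool" where
  "nim_P2_wins E w v \<longleftrightarrow> nim_lose E (w, v)"

definition hypercube_vertices :: "nat \<Rightarrow> bool list set" where
  "hypercube_vertices n = {x. length x = n}"

definition hypercube_edges :: "nat \<Rightarrow> bool list set set" where
  "hypercube_edges n = {{x, y} | x y. x \<in> hypercube_vertices n \<and> y \<in> hypercube_vertices n
      \<and> card {i. i < n \<and> x ! i \<noteq> y ! i} = 1}"

definition unit_weights :: "'a set set \<Rightarrow> 'a set \<Rightarrow> nat" where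
  "unit_weights E e = (if e \<in> E then 1 else 0)"

end

theory Submission
  imports Defs
begin

text \<open>Both winning strategies are replies that keep a parity invariant. Let all weights be 0 or 1,
let S be an independent set of vertices holding the piece, and let every vertex outside S have
an even number of live edges into S. A move out of S kills one such edge and leaves an odd, hence
positive, number of them; replying along one returns to S and restores evenness. Since weights
only decrease, the player to move in such a position loses.
For even n take S to be the vertices at even Hamming distance from the start vertex v, every
vertex having degree n. For odd n the first player moves from v to a neighbour and then takes S
to be the vertices at distance 1 from v: v is left with n - 1 live edges into S, a vertex at
distance 2 has exactly two neighbours in S, and farther vertices have none.\<close>

lemma nim_win_lose_exclusive:
  "nim_win E p \<Longrightarrow> \<not> nim_lose E p" "nim_lose E p \<Longrightarrow> \<not> nim_win E p"
proof (induction rule: nim_win_nim_lose.inducts)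
  case (win p q)
  then show ?case by (metis nim_lose.cases)
next
  case (lose p)
  then show ?case by (metis nim_win.cases)
qed

lemma nim_move_total_weight_less:
  assumes "finite E" "nim_move E p q"
  shows "sum (fst q) E < sum (fst p) E"
proof -
  obtain u k where e: "{snd p, u} \<in> E" and k: "0 < k" "k \<le> fst p {snd p, u}"
    and q: "q = ((fst p)({snd p, u} := fst p {snd p, u} - k), u)"
    using assms(2) unfolding nim_move_def by blast
  let ?e = "{snd p, u}"
  have "sum (fst q) E = fst q ?e + sum (fst p) (E - {?e})"
    using assms(1) e q by (simp add: sum.remove)
  also have "\<dots> < fst p ?e + sum (fst p) (E - {?e})"
    using q k by simp
  also have "\<dots> = sum (fst p) E"
    using assms(1) e by (simp add: sum.remove)
  finally show ?thesis .
qed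

lemma nim_lose_if_invariant:
  assumes "finite E"
    and reply: "\<And>p q. I p \<Longrightarrow> nim_move E p q \<Longrightarrow> \<exists>r. nim_move E q r \<and> I r"
    and "I p"
  shows "nim_lose E p"
  using \<open>I p\<close>
proof (induction "sum (fst p) E" arbitrary: p rule: less_induct)
  case less
  show ?case
  proof (rule nim_win_nim_lose.lose, intro allI impI)
    fix q assume pq: "nim_move E p q"
    obtain r where qr: "nim_move E q r" and "I r" using reply[OF less(2) pq] by blast
    have "sum (fst r) E < sum (fst p) E"
      using nim_move_total_weight_less[OF \<open>finite E\<close> pq]
        nim_move_total_weight_less[OF \<open>finite E\<close> qr] by simp
    with \<open>I r\<close> have "nim_lose E r" using less(1) by blast
    with qr show "nim_win E q" by (rule nim_win_nim_lose.win)
  qed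
qed

lemma nim_move_iff_weights_le_1:
  assumes "\<forall>e\<in>E. w e \<le> 1"
  shows "nim_move E (w, x) q \<longleftrightarrow>
    (\<exists>u. {x, u} \<in> E \<and> u \<noteq> x \<and> w {x, u} = 1 \<and> q = (w({x, u} := 0), u))"
proof
  assume "nim_move E (w, x) q"
  then obtain u k where "{x, u} \<in> E" "u \<noteq> x" "0 < k" "k \<le> w {x, u}"
    and "q = (w({x, u} := w {x, u} - k), u)"
    unfolding nim_move_def by auto
  moreover from this assms have "w {x, u} = 1" "k = 1" by fastforce+
  ultimately show "\<exists>u. {x, u} \<in> E \<and> u \<noteq> x \<and> w {x, u} = 1 \<and> q = (w({x, u} := 0), u)"
    by auto
next
  assume "\<exists>u. {x, u} \<in> E \<and> u \<noteq> x \<and> w {x, u} = 1 \<and> q = (w({x, u} := 0), u)"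
  then show "nim_move E (w, x) q"
    unfolding nim_move_def by (metis diff_self_eq_0 fst_conv less_one order_refl snd_conv)
qed

definition live_nbrs :: "'a set set \<Rightarrow> ('a set \<Rightarrow> nat) \<Rightarrow> 'a set \<Rightarrow> 'a \<Rightarrow> 'a set" where
  "live_nbrs E w S u = {z \<in> S. {u, z} \<in> E \<and> 0 < w {u, z}}"

lemma finite_live_nbrs:
  assumes "finite E"
  shows "finite (live_nbrs E w S u)"
proof (rule finite_imageD)
  show "finite ((\<lambda>z. {u, z}) ` live_nbrs E w S u)"
    using assms by (rule finite_subset[rotated]) (auto simp: live_nbrs_def)
  show "inj_on (\<lambda>z. {u, z}) (live_nbrs E w S u)"
    by (auto simp: inj_on_def doubleton_eq_iff)
qed

lemma live_nbrs_kill_edge: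
  assumes "x \<in> S" "u' \<notin> S"
  shows "live_nbrs E (w({u, x} := 0)) S u' =
    (if u' = u then live_nbrs E w S u - {x} else live_nbrs E w S u')"
  using assms by (auto simp: live_nbrs_def doubleton_eq_iff)

definition parity_trap :: "'a set set \<Rightarrow> 'a set \<Rightarrow> ('a set \<Rightarrow> nat) \<times> 'a \<Rightarrow> bool" where
  "parity_trap E S p \<longleftrightarrow> snd p \<in> S \<and> (\<forall>e\<in>E. fst p e \<le> 1)
     \<and> (\<forall>u. u \<notin> S \<longrightarrow> even (card (live_nbrs E (fst p) S u)))"

lemma parity_trap_reply:
  assumes "finite E" and indep: "\<And>x y. x \<in> S \<Longrightarrow> {x, y} \<in> E \<Longrightarrow> y \<notin> S"
    and trap: "parity_trap E S (w, x)" and move: "nim_move E (w, x) q"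
  shows "\<exists>r. nim_move E q r \<and> parity_trap E S r"
proof -
  have "x \<in> S" and le1: "\<forall>e\<in>E. w e \<le> 1"
    and even: "\<And>u. u \<notin> S \<Longrightarrow> even (card (live_nbrs E w S u))"
    using trap by (auto simp: parity_trap_def)
  obtain u where "{x, u} \<in> E" "w {x, u} = 1" and q: "q = (w({u, x} := 0), u)"
    using move le1 by (auto simp: nim_move_iff_weights_le_1 insert_commute)
  define w1 where "w1 = w({u, x} := 0)"
  have "u \<notin> S" using indep \<open>x \<in> S\<close> \<open>{x, u} \<in> E\<close> by blast
  have "x \<in> live_nbrs E w S u"
    using \<open>x \<in> S\<close> \<open>{x, u} \<in> E\<close> \<open>w {x, u} = 1\<close> by (simp add: live_nbrs_def insert_commute)
  then have "odd (card (live_nbrs E w1 S u))"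
    using even[OF \<open>u \<notin> S\<close>] finite_live_nbrs[OF \<open>finite E\<close>]
    by (simp add: w1_def live_nbrs_kill_edge[OF \<open>x \<in> S\<close> \<open>u \<notin> S\<close>])
      (metis card_gt_0_iff dvd_diffD1 empty_iff odd_one)
  then obtain z where z: "z \<in> live_nbrs E w1 S u"
    by (metis card.empty ex_in_conv odd_card_imp_not_empty)
  have le1': "\<forall>e\<in>E. w1 e \<le> 1" using le1 by (simp add: w1_def)
  have "z \<in> S" "{u, z} \<in> E" "w1 {u, z} = 1"
    using z le1' by (auto simp: live_nbrs_def intro: antisym)
  then have reply: "nim_move E q (w1({u, z} := 0), z)"
    using \<open>u \<notin> S\<close> le1' by (auto simp: q w1_def[symmetric] nim_move_iff_weights_le_1)
  have "z \<noteq> x" using z by (auto simp: live_nbrs_def w1_def split: if_splits)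
  have "parity_trap E S (w1({u, z} := 0), z)"
    unfolding parity_trap_def
  proof (intro conjI allI impI)
    fix u' assume "u' \<notin> S"
    then show "even (card (live_nbrs E (fst (w1({u, z} := 0), z)) S u'))"
      using even \<open>x \<in> live_nbrs E w S u\<close> \<open>z \<noteq> x\<close> z finite_live_nbrs[OF \<open>finite E\<close>]
      by (auto simp: live_nbrs_kill_edge[OF \<open>z \<in> S\<close>] live_nbrs_kill_edge[OF \<open>x \<in> S\<close>] w1_def)
  qed (use \<open>z \<in> S\<close> le1' in auto)
  with reply show ?thesis by blast
qed

theorem nim_lose_parity_trap:
  assumes "finite E" "\<And>x y. x \<in> S \<Longrightarrow> {x, y} \<in> E \<Longrightarrow> y \<notin> S" "parity_trap E S p"
  shows "nim_lose E p"
proof (rule nim_lose_if_invariant[where I = "parity_trap E S", OF assms(1) _ assms(3)])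
  fix p' q assume "parity_trap E S p'" "nim_move E p' q"
  then show "\<exists>r. nim_move E q r \<and> parity_trap E S r"
    using parity_trap_reply[OF assms(1,2), where w = "fst p'" and x = "snd p'"] by simp
qed

definition flip :: "bool list \<Rightarrow> nat \<Rightarrow> bool list" where
  "flip x i = x[i := \<not> x ! i]"

lemma length_flip [simp]: "length (flip x i) = length x"
  by (simp add: flip_def)

lemma nth_flip: "flip x i ! j = (if j = i \<and> i < length x then \<not> x ! i else x ! j)"
  by (cases "i < length x") (auto simp: flip_def list_update_beyond)

lemma flip_flip [simp]: "flip (flip x i) i = x"
  by (rule nth_equalityI) (auto simp: nth_flip)

lemma flip_neq: "i < length x \<Longrightarrow> flip x i \<noteq> x"
  by (metis flip_def list_update_id nth_list_update_eq)

lemma flip_eq_iff: "i < length x \<Longrightarrow> j < length x \<Longrightarrow> flip x i = flip x j \<longleftrightarrow> i = j"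
proof
  assume "i < length x" "j < length x" "flip x i = flip x j"
  then have "flip x i ! i = flip x j ! i" by simp
  with \<open>i < length x\<close> show "i = j" by (auto simp: nth_flip split: if_splits)
qed simp

lemma hypercube_edge_iff:
  "{a, b} \<in> hypercube_edges n \<longleftrightarrow> length a = n \<and> (\<exists>i<n. b = flip a i)"
proof
  assume "{a, b} \<in> hypercube_edges n"
  then obtain x y where ab: "{a, b} = {x, y}" and lx: "length x = n" and ly: "length y = n"
    and "card {i. i < n \<and> x ! i \<noteq> y ! i} = 1"
    unfolding hypercube_edges_def hypercube_vertices_def by blast
  then obtain i where D: "{i. i < n \<and> x ! i \<noteq> y ! i} = {i}" by (auto simp: card_Suc_eq)
  have y: "y = flip x i"
  proof (rule nth_equalityI)
    fix k assume "k < length y"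
    with D ly lx show "y ! k = flip x i ! k"
      by (cases "k = i") (auto simp: nth_flip)
  qed (use lx ly in simp)
  have "i < n" using D by blast
  from ab y have "a = x \<and> b = flip x i \<or> a = flip x i \<and> b = x"
    by (auto simp: doubleton_eq_iff)
  with lx \<open>i < n\<close> show "length a = n \<and> (\<exists>i<n. b = flip a i)"
    by (metis flip_flip length_flip)
next
  assume "length a = n \<and> (\<exists>i<n. b = flip a i)"
  then obtain i where la: "length a = n" and "i < n" and b: "b = flip a i" by blast
  then have "{k. k < n \<and> a ! k \<noteq> b ! k} = {i}" by (auto simp: nth_flip)
  with la b have "a \<in> hypercube_vertices n \<and> b \<in> hypercube_vertices n
      \<and> card {k. k < n \<and> a ! k \<noteq> b ! k} = 1"
    by (simp add: hypercube_vertices_def)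
  then show "{a, b} \<in> hypercube_edges n"
    unfolding hypercube_edges_def by blast
qed

lemma finite_hypercube_edges: "finite (hypercube_edges n)"
proof -
  have "finite (hypercube_vertices n)"
    using finite_lists_length_eq[of "UNIV :: bool set" n]
    by (simp add: hypercube_vertices_def)
  moreover have "hypercube_edges n \<subseteq> Pow (hypercube_vertices n)"
    unfolding hypercube_edges_def by auto
  ultimately show ?thesis by (meson finite_Pow_iff finite_subset)
qed

lemma card_live_nbrs_unit_weights_hypercube:
  "card (live_nbrs (hypercube_edges n) (unit_weights (hypercube_edges n)) S u) =
    (if length u = n then card {i. i < n \<and> flip u i \<in> S} else 0)"
proof -
  have "live_nbrs (hypercube_edges n) (unit_weights (hypercube_edges n)) S u =
      (if length u = n then flip u ` {i. i < n \<and> flip u i \<in> S} else {})"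
    by (auto simp: live_nbrs_def unit_weights_def hypercube_edge_iff)
  moreover have "inj_on (flip u) {i. i < n \<and> flip u i \<in> S}" if "length u = n"
    using that by (auto simp: inj_on_def flip_eq_iff)
  ultimately show ?thesis by (simp add: card_image)
qed

definition hamming :: "bool list \<Rightarrow> bool list \<Rightarrow> nat" where
  "hamming x y = card {i. i < length x \<and> x ! i \<noteq> y ! i}"

lemma hamming_self [simp]: "hamming x x = 0"
  by (simp add: hamming_def)

lemma hamming_eq_0_iff:
  assumes "length x = length y"
  shows "hamming x y = 0 \<longleftrightarrow> x = y"
proof
  assume "hamming x y = 0"
  then have "\<forall>i<length x. x ! i = y ! i" by (simp add: hamming_def)
  with assms show "x = y" by (simp add: nth_equalityI)
qed simp

lemma hamming_flip:
  assumes "length x = length y" "i < length x"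
  shows "x ! i = y ! i \<Longrightarrow> hamming (flip x i) y = hamming x y + 1"
    and "x ! i \<noteq> y ! i \<Longrightarrow> hamming (flip x i) y + 1 = hamming x y"
proof -
  let ?D = "{j. j < length x \<and> x ! j \<noteq> y ! j}"
  have "finite ?D" by simp
  have flip_D: "hamming (flip x i) y = card (if x ! i = y ! i then insert i ?D else ?D - {i})"
  proof -
    have "{j. j < length x \<and> flip x i ! j \<noteq> y ! j} =
        (if x ! i = y ! i then insert i ?D else ?D - {i})"
      using assms by (auto simp: nth_flip)
    then show ?thesis by (simp add: hamming_def)
  qed
  show "hamming (flip x i) y = hamming x y + 1" if "x ! i = y ! i"
    using that flip_D \<open>finite ?D\<close> by (simp add: hamming_def)
  show "hamming (flip x i) y + 1 = hamming x y" if "x ! i \<noteq> y ! i"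
  proof -
    have "i \<in> ?D" using that assms(2) by simp
    then have "card ?D > 0" using \<open>finite ?D\<close> card_gt_0_iff by blast
    with \<open>i \<in> ?D\<close> show ?thesis
      using that flip_D \<open>finite ?D\<close> by (simp add: hamming_def)
  qed
qed

lemma even_hamming_flip_iff:
  assumes "length x = length y" "i < length x"
  shows "even (hamming (flip x i) y) \<longleftrightarrow> odd (hamming x y)"
  using hamming_flip[OF assms] by (cases "x ! i = y ! i") (simp, metis even_Suc Suc_eq_plus1)

lemma hypercube_edge_hamming:
  assumes "{x, y} \<in> hypercube_edges n" "length v = n"
  shows "hamming y v = hamming x v + 1 \<or> hamming y v + 1 = hamming x v"
proof -
  obtain i where "length x = n" "i < n" "y = flip x i"
    using assms(1) by (auto simp: hypercube_edge_iff)
  with assms(2) show ?thesis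
    using hamming_flip[of x v i] by (cases "x ! i = v ! i") auto
qed

lemma hamming_flip_eq_1_iff:
  assumes "length u = length v" "i < length u" "u \<noteq> v"
  shows "hamming (flip u i) v = 1 \<longleftrightarrow> hamming u v = 2 \<and> u ! i \<noteq> v ! i"
  using hamming_flip[OF assms(1,2)] hamming_eq_0_iff[OF assms(1)] assms(3)
  by (cases "u ! i = v ! i") auto

lemma nim_lose_hypercube_even:
  assumes "even n" "length v = n"
  shows "nim_lose (hypercube_edges n) (unit_weights (hypercube_edges n), v)"
proof (rule nim_lose_parity_trap[where S = "{x. even (hamming x v)}", OF finite_hypercube_edges])
  let ?S = "{x. even (hamming x v)}"
  show "y \<notin> ?S" if "x \<in> ?S" "{x, y} \<in> hypercube_edges n" for x y
    using that assms(2) even_hamming_flip_iff[of x v] by (auto simp: hypercube_edge_iff)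
  show "parity_trap (hypercube_edges n) ?S (unit_weights (hypercube_edges n), v)"
    unfolding parity_trap_def
  proof (intro conjI allI impI)
    fix u assume "u \<notin> ?S"
    then have "{i. i < n \<and> flip u i \<in> ?S} = {..<n}" if "length u = n"
      using that assms(2) even_hamming_flip_iff[of u v] by auto
    with assms(1) show "even (card (live_nbrs (hypercube_edges n)
        (fst (unit_weights (hypercube_edges n), v)) ?S u))"
      by (simp add: card_live_nbrs_unit_weights_hypercube)
  qed (auto simp: unit_weights_def)
qed

lemma parity_trap_hypercube_odd:
  assumes "odd n" "length v = n"
  defines "E \<equiv> hypercube_edges n"
  shows "parity_trap E {x. hamming x v = 1} ((unit_weights E)({v, flip v 0} := 0), flip v 0)"
  unfolding parity_trap_def
proof (intro conjI allI impI)
  let ?S = "{x. hamming x v = 1}" and ?x0 = "flip v 0"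
  have "0 < n" using assms(1) by presburger
  have "?x0 \<in> ?S" using hamming_flip(1)[of v v 0] \<open>0 < n\<close> assms(2) by simp
  then show "snd ((unit_weights E)({v, ?x0} := 0), ?x0) \<in> ?S" by simp
  fix u assume "u \<notin> ?S"
  have card_live: "card (live_nbrs E (unit_weights E) ?S u) =
      (if length u \<noteq> n then 0 else if u = v then n else if hamming u v = 2 then 2 else 0)"
  proof -
    have "card {i. i < n \<and> flip u i \<in> ?S} = (if u = v then n else if hamming u v = 2 then 2 else 0)"
      if "length u = n"
    proof (cases "u = v")
      case True
      then have "{i. i < n \<and> flip u i \<in> ?S} = {..<n}"
        using hamming_flip(1)[of v v] assms(2) by auto
      with True show ?thesis by simp
    next
      case False
      then have "{i. i < n \<and> flip u i \<in> ?S} =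
          (if hamming u v = 2 then {i. i < length u \<and> u ! i \<noteq> v ! i} else {})"
        using that hamming_flip_eq_1_iff[of u v] assms(2) by auto
      with False show ?thesis by (simp add: hamming_def)
    qed
    then show ?thesis
      unfolding E_def card_live_nbrs_unit_weights_hypercube by auto
  qed
  have "?x0 \<in> live_nbrs E (unit_weights E) ?S v"
    using \<open>?x0 \<in> ?S\<close> \<open>0 < n\<close> assms(2)
    by (auto simp: live_nbrs_def unit_weights_def E_def hypercube_edge_iff)
  then show "even (card (live_nbrs E (fst ((unit_weights E)({v, ?x0} := 0), ?x0)) ?S u))"
    using card_live assms(1,2) \<open>?x0 \<in> ?S\<close> \<open>u \<notin> ?S\<close>
      finite_live_nbrs[OF finite_hypercube_edges[of n]]
    by (auto simp: live_nbrs_kill_edge E_def)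
qed (auto simp: unit_weights_def)

lemma nim_win_hypercube_odd:
  assumes "odd n" "length v = n"
  shows "nim_win (hypercube_edges n) (unit_weights (hypercube_edges n), v)"
proof (rule nim_win_nim_lose.win)
  let ?E = "hypercube_edges n"
  have "0 < n" using assms(1) by presburger
  then show "nim_move ?E (unit_weights ?E, v) ((unit_weights ?E)({v, flip v 0} := 0), flip v 0)"
    using assms(2) flip_neq[of 0 v]
    by (auto simp: nim_move_iff_weights_le_1 unit_weights_def hypercube_edge_iff)
  show "nim_lose ?E ((unit_weights ?E)({v, flip v 0} := 0), flip v 0)"
    using finite_hypercube_edges hypercube_edge_hamming[OF _ assms(2)]
    by (intro nim_lose_parity_trap[OF _ _ parity_trap_hypercube_odd[OF assms]]) fastforce+
qed

theorem mainTheorem5: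
  fixes n :: nat and v :: "bool list"
  assumes "n \<ge> 1" and "v \<in> hypercube_vertices n"
  shows "nim_P2_wins (hypercube_edges n) (unit_weights (hypercube_edges n)) v \<longleftrightarrow> even n"
proof -
  have "length v = n" using assms(2) by (simp add: hypercube_vertices_def)
  show ?thesis
  proof (cases "even n")
    case True
    with nim_lose_hypercube_even[OF True \<open>length v = n\<close>] show ?thesis
      by (simp add: nim_P2_wins_def)
  next
    case False
    with nim_win_lose_exclusive(1)[OF nim_win_hypercube_odd[OF False \<open>length v = n\<close>]]
    show ?thesis by (simp add: nim_P2_wins_def)
  qed
qed

end
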